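(* Let $\psi=(x,y,z):\Sigma\to\mathbb{R}^3$ be a $[\varphi,\vec e_3]$-minimal immersion, $\xi=u+iv$ a conformal parameter for $\psi$ with induced metric $ds^2=E|d\xi|^2$, and let $\psi^*=(x^*,y^*,z^* ):\Sigma\to\mathbb{L}^3$ be a map satisfying $x^*_\xi=-ie^{\varphi(z)}y_\xi$, $y^*_\xi=ie^{\varphi(z)}x_\xi$, $z^*_\xi=e^{\varphi(z)}z_\xi$. Then $\xi$ is also a conformal parameter for $\psi^*$, $x^{*2}_\xi+y^{*2}_\xi-z^{*2}_\xi=0$, and $$E^*:=2(|x^*_\xi|^2+|y^*_\xi|^2-|z^*_\xi|^2)=2e^{2\varphi}\eta^2(|x_\xi|^2+|y_\xi|^2+|z_\xi|^2)=e^{2\varphi}\eta^2E,$$ where $\eta=\langle N,\vec e_3\rangle$ is the angle function of $\psi$ with respect to the unit normal $N=-i\,\dfrac{\psi_\xi\wedge\psi_{\bar\xi}}{|\psi_\xi\wedge\psi_{\bar\xi}|}$. Furthermore, $\eta\neq0$ (i.e. $\psi$ is locally a vertical graph $z=z(x,y)$) if and only if $\psi^*$ is an immersion, and in this case a timelike unit normal for $\psi^*$ is $$N^*=i\frac{\psi^*_\xi\wedge_{\mathbb{L}^3}\psi^*_{\bar\xi}}{\|\psi^*_\xi\wedge_{\mathbb{L}^3}\psi^*_{\bar\xi}\|}=\frac{1}{\eta E}(\eta_1,\eta_2,E)=\big(-z_x,-z_y,\sqrt{1+z_x^2+z_y^2}\big),$$ where $\eta>0$ and $-2i\psi_\xi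\wedge\psi_{\bar\xi}=(\eta_1,\eta_2,\eta_3)$.
   Context: $\varphi$ is a smooth function on an open interval $I$, $\vec e_3=(0,0,1)$, $\wedge$ is the Euclidean cross product. An immersion $\psi=(x,y,z)$ into $\mathbb{R}^3$ with $z\in I$ is $[\varphi,\vec e_3]$-minimal if for every conformal parameter $\xi$: $2x_{\xi\bar\xi}+\dot\varphi(z)(z_\xi x_{\bar\xi}+z_{\bar\xi}x_\xi)=0$, $2y_{\xi\bar\xi}+\dot\varphi(z)(z_\xi y_{\bar\xi}+z_{\bar\xi}y_\xi)=0$, $2z_{\xi\bar\xi}-\dot\varphi(z)(|x_\xi|^2+|y_\xi|^2-|z_\xi|^2)=0$ (equivalently mean curvature vector $\dot\varphi(z)\vec e_3^\perp$). $\mathbb{L}^3$ is $\mathbb{R}^3$ with $\langle\langle\cdot,\cdot\rangle\rangle=dx^2+dy^2-dz^2$, $\|V\|=\sqrt{|\langle\langle V,V\rangle\rangle|}$, and $\wedge_{\mathbb{L}^3}$ is defined by $\langle\langle A\wedge_{\mathbb{L}^3}B,C\rangle\rangle=-\det(A,B,C)$. In $e^{2\varphi}$, $\varphi$ means $\varphi(z)$. *)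

theory Defs
  imports "HOL-Analysis.Analysis"
begin

text \<open>Local setting: an open set U of the complex plane is the domain of the conformal
parameter xi = u + i v. Real-valued functions on U are the coordinate functions.\<close>

type_synonym cvec = "complex \<times> complex \<times> complex"

fun pdiff_iter :: "bool list \<Rightarrow> (complex \<Rightarrow> 'a::real_normed_vector) \<Rightarrow> complex \<Rightarrow> 'a" where
  "pdiff_iter [] f = f"
| "pdiff_iter (b # bs) f = (\<lambda>p. frechet_derivative (pdiff_iter bs f) (at p) (if b then 1 else \<i>))"

definition smooth_on :: "complex set \<Rightarrow> (complex \<Rightarrow> 'a::real_normed_vector) \<Rightarrow> bool" where
  "smooth_on U f \<longleftrightarrow> (\<forall>bs. pdiff_iter bs f differentiable_on U)"

definition smooth_real_on :: "real set \<Rightarrow> (real \<Rightarrow> real) \<Rightarrow> bool" where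
  "smooth_real_on I f \<longleftrightarrow> (\<forall>n. \<forall>t\<in>I. ((deriv ^^ n) f) differentiable (at t))"

definition Dxi :: "(complex \<Rightarrow> complex) \<Rightarrow> complex \<Rightarrow> complex" where
  "Dxi f p = (frechet_derivative f (at p) 1 - \<i> * frechet_derivative f (at p) \<i>) / 2"

definition Dxib :: "(complex \<Rightarrow> complex) \<Rightarrow> complex \<Rightarrow> complex" where
  "Dxib f p = (frechet_derivative f (at p) 1 + \<i> * frechet_derivative f (at p) \<i>) / 2"

definition cf :: "(complex \<Rightarrow> real) \<Rightarrow> complex \<Rightarrow> complex" where
  "cf f = (\<lambda>q. complex_of_real (f q))"

definition immersion_at :: "(complex \<Rightarrow> real) \<Rightarrow> (complex \<Rightarrow> real) \<Rightarrow> (complex \<Rightarrow> real) \<Rightarrow> complex \<Rightarrow> bool" where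
  "immersion_at x y z p \<longleftrightarrow>
     (\<lambda>q. (x q, y q, z q)) differentiable (at p) \<and>
     inj (frechet_derivative (\<lambda>q. (x q, y q, z q)) (at p))"

definition Dxi3 :: "(complex \<Rightarrow> real) \<Rightarrow> (complex \<Rightarrow> real) \<Rightarrow> (complex \<Rightarrow> real) \<Rightarrow> complex \<Rightarrow> cvec" where
  "Dxi3 x y z p = (Dxi (cf x) p, Dxi (cf y) p, Dxi (cf z) p)"

definition Dxib3 :: "(complex \<Rightarrow> real) \<Rightarrow> (complex \<Rightarrow> real) \<Rightarrow> (complex \<Rightarrow> real) \<Rightarrow> complex \<Rightarrow> cvec" where
  "Dxib3 x y z p = (Dxib (cf x) p, Dxib (cf y) p, Dxib (cf z) p)"

definition ccross :: "cvec \<Rightarrow> cvec \<Rightarrow> cvec" where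
  "ccross = (\<lambda>(a1,a2,a3) (b1,b2,b3). (a2*b3 - a3*b2, a3*b1 - a1*b3, a1*b2 - a2*b1))"

definition linner :: "cvec \<Rightarrow> cvec \<Rightarrow> complex" where
  "linner = (\<lambda>(a1,a2,a3) (b1,b2,b3). a1*b1 + a2*b2 - a3*b3)"

text \<open>Lorentzian cross product, characterised by linner (A x_L B) C = - det(A,B,C);
  written out explicitly: (-(AxB)_1, -(AxB)_2, (AxB)_3).\<close>
definition lcross :: "cvec \<Rightarrow> cvec \<Rightarrow> cvec" where
  "lcross A B = (case ccross A B of (w1,w2,w3) \<Rightarrow> (-w1, -w2, w3))"

definition cnorm3 :: "cvec \<Rightarrow> real" where
  "cnorm3 = (\<lambda>(a1,a2,a3). sqrt ((cmod a1)^2 + (cmod a2)^2 + (cmod a3)^2))"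

definition lnorm3 :: "cvec \<Rightarrow> real" where
  "lnorm3 = (\<lambda>(a1,a2,a3). sqrt \<bar>(cmod a1)^2 + (cmod a2)^2 - (cmod a3)^2\<bar>)"

definition cscale :: "complex \<Rightarrow> cvec \<Rightarrow> cvec" where
  "cscale c = (\<lambda>(a1,a2,a3). (c*a1, c*a2, c*a3))"

definition Efac :: "(complex \<Rightarrow> real) \<Rightarrow> (complex \<Rightarrow> real) \<Rightarrow> (complex \<Rightarrow> real) \<Rightarrow> complex \<Rightarrow> real" where
  "Efac x y z p = 2 * ((cmod (Dxi (cf x) p))^2 + (cmod (Dxi (cf y) p))^2 + (cmod (Dxi (cf z) p))^2)"

definition Estar :: "(complex \<Rightarrow> real) \<Rightarrow> (complex \<Rightarrow> real) \<Rightarrow> (complex \<Rightarrow> real) \<Rightarrow> complex \<Rightarrow> real" where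
  "Estar x y z p = 2 * ((cmod (Dxi (cf x) p))^2 + (cmod (Dxi (cf y) p))^2 - (cmod (Dxi (cf z) p))^2)"

definition Nvec :: "(complex \<Rightarrow> real) \<Rightarrow> (complex \<Rightarrow> real) \<Rightarrow> (complex \<Rightarrow> real) \<Rightarrow> complex \<Rightarrow> cvec" where
  "Nvec x y z p = (let W = ccross (Dxi3 x y z p) (Dxib3 x y z p)
                   in cscale (- \<i> / complex_of_real (cnorm3 W)) W)"

text \<open>Angle function eta = <N, e3> (N is a real vector; we take its third component).\<close>
definition eta :: "(complex \<Rightarrow> real) \<Rightarrow> (complex \<Rightarrow> real) \<Rightarrow> (complex \<Rightarrow> real) \<Rightarrow> complex \<Rightarrow> real" where
  "eta x y z p = Re (snd (snd (Nvec x y z p)))"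

definition etavec :: "(complex \<Rightarrow> real) \<Rightarrow> (complex \<Rightarrow> real) \<Rightarrow> (complex \<Rightarrow> real) \<Rightarrow> complex \<Rightarrow> cvec" where
  "etavec x y z p = cscale (-2 * \<i>) (ccross (Dxi3 x y z p) (Dxib3 x y z p))"

definition Nstar :: "(complex \<Rightarrow> real) \<Rightarrow> (complex \<Rightarrow> real) \<Rightarrow> (complex \<Rightarrow> real) \<Rightarrow> complex \<Rightarrow> cvec" where
  "Nstar x y z p = (let W = lcross (Dxi3 x y z p) (Dxib3 x y z p)
                   in cscale (\<i> / complex_of_real (lnorm3 W)) W)"

end

theory Submission
  imports Defs
begin

text \<open>
  Write \<open>\<psi>\<^sub>u, \<psi>\<^sub>v\<close> for the partial derivatives of \<open>\<psi>\<close> at a point. Conformality says that they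
  are orthogonal and of equal length, so \<open>|\<psi>\<^sub>u \<times> \<psi>\<^sub>v| = |\<psi>\<^sub>u|\<^sup>2 = E\<close>; moreover
  \<open>(\<eta>\<^sub>1, \<eta>\<^sub>2, \<eta>\<^sub>3) = \<psi>\<^sub>u \<times> \<psi>\<^sub>v\<close> and \<open>\<eta> = \<eta>\<^sub>3 / E\<close>. The equations defining \<open>\<psi>\<^sup>*\<close> say
  \<open>\<psi>\<^sup>*\<^sub>u = \<rho> (-y\<^sub>v, x\<^sub>v, z\<^sub>u)\<close> and \<open>\<psi>\<^sup>*\<^sub>v = \<rho> (y\<^sub>u, -x\<^sub>u, z\<^sub>v)\<close> with \<open>\<rho> = e\<^sup>\<phi>\<close>; these are
  independent exactly when \<open>\<eta>\<^sub>3 = x\<^sub>u y\<^sub>v - x\<^sub>v y\<^sub>u \<noteq> 0\<close>, and every other claim is a polynomial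
  identity in the six partials modulo the two conformality relations.
\<close>

definition partial_u :: "(complex \<Rightarrow> 'a::real_normed_vector) \<Rightarrow> complex \<Rightarrow> 'a" where
  "partial_u f p = frechet_derivative f (at p) 1"

definition partial_v :: "(complex \<Rightarrow> 'a::real_normed_vector) \<Rightarrow> complex \<Rightarrow> 'a" where
  "partial_v f p = frechet_derivative f (at p) \<i>"

lemma bounded_linear_complex_domain:
  fixes f' :: "complex \<Rightarrow> 'a::real_normed_vector"
  assumes "bounded_linear f'"
  shows "f' h = Re h *\<^sub>R f' 1 + Im h *\<^sub>R f' \<i>"
proof -
  interpret bounded_linear f' by fact
  have "h = Re h *\<^sub>R 1 + Im h *\<^sub>R \<i>"
    by (simp add: complex_eq_iff)
  then have "f' h = f' (Re h *\<^sub>R 1 + Im h *\<^sub>R \<i>)"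
    by (rule arg_cong)
  then show ?thesis
    by (simp only: add scale)
qed

lemma has_derivative_partials:
  fixes f :: "complex \<Rightarrow> 'a::real_normed_vector"
  assumes "f differentiable (at p)"
  shows "(f has_derivative (\<lambda>h. Re h *\<^sub>R partial_u f p + Im h *\<^sub>R partial_v f p)) (at p)"
proof -
  have D: "(f has_derivative frechet_derivative f (at p)) (at p)"
    using assms frechet_derivative_works by blast
  have "frechet_derivative f (at p) = (\<lambda>h. Re h *\<^sub>R partial_u f p + Im h *\<^sub>R partial_v f p)"
    unfolding partial_u_def partial_v_def
    by (intro ext bounded_linear_complex_domain has_derivative_bounded_linear[OF D])
  with D show ?thesis
    by simp
qed

lemma Dxi_cf:
  fixes f :: "complex \<Rightarrow> real"
  assumes "f differentiable (at p)"
  shows "Dxi (cf f) p = Complex (partial_u f p / 2) (- partial_v f p / 2)"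
    and "Dxib (cf f) p = Complex (partial_u f p / 2) (partial_v f p / 2)"
proof -
  have "(cf f has_derivative (\<lambda>h. of_real (frechet_derivative f (at p) h))) (at p)"
    unfolding cf_def using assms frechet_derivative_works has_derivative_of_real by blast
  then have "frechet_derivative (cf f) (at p) = (\<lambda>h. of_real (frechet_derivative f (at p) h))"
    by (rule frechet_derivative_at[symmetric])
  then show "Dxi (cf f) p = Complex (partial_u f p / 2) (- partial_v f p / 2)"
    and "Dxib (cf f) p = Complex (partial_u f p / 2) (partial_v f p / 2)"
    by (simp_all add: Dxi_def Dxib_def partial_u_def partial_v_def complex_eq_iff)
qed

lemma immersion_at_iff:
  assumes "x differentiable (at p)" "y differentiable (at p)" "z differentiable (at p)"
  shows "immersion_at x y z p \<longleftrightarrow>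
    (\<forall>s t. s *\<^sub>R (partial_u x p, partial_u y p, partial_u z p)
           + t *\<^sub>R (partial_v x p, partial_v y p, partial_v z p) = 0 \<longrightarrow> s = 0 \<and> t = 0)"
    (is "_ \<longleftrightarrow> (\<forall>s t. ?d' s t = 0 \<longrightarrow> _)")
proof -
  let ?\<psi> = "\<lambda>q. (x q, y q, z q)"
  let ?d = "\<lambda>h. ?d' (Re h) (Im h)"
  have "(?\<psi> has_derivative (\<lambda>h. (Re h *\<^sub>R partial_u x p + Im h *\<^sub>R partial_v x p,
      Re h *\<^sub>R partial_u y p + Im h *\<^sub>R partial_v y p, Re h *\<^sub>R partial_u z p + Im h *\<^sub>R partial_v z p))) (at p)"
    by (intro has_derivative_Pair has_derivative_partials assms)
  then have D: "(?\<psi> has_derivative ?d) (at p)"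
    by simp
  have "frechet_derivative ?\<psi> (at p) = ?d"
    using D by (rule frechet_derivative_at[symmetric])
  then have "immersion_at x y z p \<longleftrightarrow> inj ?d"
    unfolding immersion_at_def using differentiableI[OF D] by simp
  also have "\<dots> \<longleftrightarrow> (\<forall>h. ?d h = 0 \<longrightarrow> h = 0)"
    using D by (intro linear_injective_0 has_derivative_linear)
  also have "\<dots> \<longleftrightarrow> (\<forall>s t. ?d' s t = 0 \<longrightarrow> s = 0 \<and> t = 0)"
  proof safe
    fix s t
    assume "\<forall>h. ?d h = 0 \<longrightarrow> h = 0" and "?d' s t = 0"
    then have "Complex s t = 0"
      by (metis complex.sel(1) complex.sel(2))
    then show "s = 0" and "t = 0"
      by (simp_all add: complex_eq_iff)
  next
    fix h :: complex
    assume "\<forall>s t. ?d' s t = 0 \<longrightarrow> s = 0 \<and> t = 0" and "?d h = 0"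
    then have "Re h = 0 \<and> Im h = 0"
      by blast
    then show "h = 0"
      by (simp add: complex_eq_iff)
  qed
  finally show ?thesis .
qed

lemma ccross_Dxi3_Dxib3:
  assumes "x differentiable (at p)" "y differentiable (at p)" "z differentiable (at p)"
  shows "ccross (Dxi3 x y z p) (Dxib3 x y z p) =
    (Complex 0 ((partial_u y p * partial_v z p - partial_u z p * partial_v y p) / 2),
     Complex 0 ((partial_u z p * partial_v x p - partial_u x p * partial_v z p) / 2),
     Complex 0 ((partial_u x p * partial_v y p - partial_v x p * partial_u y p) / 2))"
  unfolding ccross_def Dxi3_def Dxib3_def Dxi_cf[OF assms(1)] Dxi_cf[OF assms(2)] Dxi_cf[OF assms(3)]
  by (simp add: complex_eq_iff algebra_simps divide_simps)

lemma partials_of_graph: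
  fixes g :: "real \<times> real \<Rightarrow> real"
  assumes "open V" "p \<in> V" "\<forall>q\<in>V. z q = g (x q, y q)"
    and "x differentiable (at p)" "y differentiable (at p)" "g differentiable (at (x p, y p))"
  defines "gx \<equiv> frechet_derivative g (at (x p, y p)) (1, 0)"
    and "gy \<equiv> frechet_derivative g (at (x p, y p)) (0, 1)"
  shows "partial_u z p = partial_u x p * gx + partial_u y p * gy"
    and "partial_v z p = partial_v x p * gx + partial_v y p * gy"
proof -
  define g' where "g' = frechet_derivative g (at (x p, y p))"
  have g': "(g has_derivative g') (at (x p, y p))"
    using assms(6) frechet_derivative_works unfolding g'_def by blast
  interpret g': bounded_linear g'
    using g' by (rule has_derivative_bounded_linear)
  have g'_eq: "g' (a, b) = a * gx + b * gy" for a b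
  proof -
    have "g' (a, b) = g' (a *\<^sub>R (1, 0) + b *\<^sub>R (0, 1))"
      by simp
    then show ?thesis
      unfolding gx_def gy_def g'_def[symmetric] by (simp only: g'.add g'.scale) simp
  qed
  have "((\<lambda>q. (x q, y q)) has_derivative
      (\<lambda>h. (frechet_derivative x (at p) h, frechet_derivative y (at p) h))) (at p)"
    using assms(4,5) by (intro has_derivative_Pair) (simp_all add: frechet_derivative_works)
  then have "((g \<circ> (\<lambda>q. (x q, y q))) has_derivative
      g' \<circ> (\<lambda>h. (frechet_derivative x (at p) h, frechet_derivative y (at p) h))) (at p)"
    by (rule diff_chain_at) (rule g')
  then have "((\<lambda>q. g (x q, y q)) has_derivative
      (\<lambda>h. g' (frechet_derivative x (at p) h, frechet_derivative y (at p) h))) (at p)"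
    by (simp add: comp_def)
  then have "(z has_derivative
      (\<lambda>h. g' (frechet_derivative x (at p) h, frechet_derivative y (at p) h))) (at p)"
    by (rule has_derivative_transform_within_open[where s = V]) (use assms(1-3) in auto)
  then have "frechet_derivative z (at p) =
      (\<lambda>h. g' (frechet_derivative x (at p) h, frechet_derivative y (at p) h))"
    by (rule frechet_derivative_at[symmetric])
  then show "partial_u z p = partial_u x p * gx + partial_u y p * gy"
    and "partial_v z p = partial_v x p * gx + partial_v y p * gy"
    by (simp_all add: partial_u_def partial_v_def g'_eq)
qed

locale conformal_frame =
  fixes xu xv yu yv zu zv :: real
  assumes equal_length: "xv^2 + yv^2 + zv^2 = xu^2 + yu^2 + zu^2"
    and orthogonal: "xu * xv + yu * yv + zu * zv = 0"
    and nondegenerate: "0 < xu^2 + yu^2 + zu^2"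
begin

abbreviation "E \<equiv> xu^2 + yu^2 + zu^2"
abbreviation "eta1 \<equiv> yu * zv - zu * yv"
abbreviation "eta2 \<equiv> zu * xv - xu * zv"
abbreviation "eta3 \<equiv> xu * yv - xv * yu"

lemma norm_cross: "eta1^2 + eta2^2 + eta3^2 = E^2"
  using equal_length orthogonal by algebra

lemma eta3_squared: "eta3^2 = E * (E - zu^2 - zv^2)"
  using equal_length orthogonal by algebra

lemma dual_cross:
  shows "(xu * zu + xv * zv) * E = - eta1 * eta3"
    and "(yu * zu + yv * zv) * E = - eta2 * eta3"
  using equal_length orthogonal by algebra+

lemma vertical_projections:
  "(xu * zu + xv * zv)^2 + (yu * zu + yv * zv)^2 = (zu^2 + zv^2) * (E - zu^2 - zv^2)"
  using equal_length orthogonal by algebra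

lemma dual_cross_norm:
  "(xu * zu + xv * zv)^2 + (yu * zu + yv * zv)^2 - eta3^2 = - ((eta3^2 / E)^2)"
proof -
  have "X = - ((d^2 / e)^2)" if "X * e^2 = - ((d^2)^2)" "e \<noteq> 0" for X d e :: real
    using that by (simp add: power_divide field_simps)
  moreover have "((xu * zu + xv * zv)^2 + (yu * zu + yv * zv)^2 - eta3^2) * E^2 = - ((eta3^2)^2)"
    using equal_length orthogonal by algebra
  ultimately show ?thesis
    using nondegenerate by simp
qed

lemma dual_frame_orthogonal:
  shows "- eta1 * yv + eta2 * xv - E * zu = 0"
    and "eta1 * yu - eta2 * xu - E * zv = 0"
  using equal_length orthogonal by algebra+

lemma dual_frame_independent_iff:
  "(\<forall>s t. s *\<^sub>R (- yv, xv, zu) + t *\<^sub>R (yu, - xu, zv) = 0 \<longrightarrow> s = 0 \<and> t = 0) \<longleftrightarrow> eta3 \<noteq> 0"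
proof
  assume indep: "\<forall>s t. s *\<^sub>R (- yv, xv, zu) + t *\<^sub>R (yu, - xu, zv) = 0 \<longrightarrow> s = 0 \<and> t = 0"
  show "eta3 \<noteq> 0"
  proof
    assume "eta3 = 0"
    then have "zu^2 + zv^2 = E"
      using eta3_squared nondegenerate by simp
    then have "zv \<noteq> 0 \<or> zu \<noteq> 0"
      using nondegenerate by auto
    have "xu * zu + xv * zv = 0" and "yu * zu + yv * zv = 0"
      using vertical_projections \<open>zu^2 + zv^2 = E\<close> by (simp_all add: sum_power2_eq_zero_iff)
    then have "zv *\<^sub>R (- yv, xv, zu) + (- zu) *\<^sub>R (yu, - xu, zv) = 0"
      by (simp add: zero_prod_def algebra_simps)
    with indep have "zv = 0 \<and> - zu = 0"
      by blast
    with \<open>zv \<noteq> 0 \<or> zu \<noteq> 0\<close> show False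
      by simp
  qed
next
  assume "eta3 \<noteq> 0"
  show "\<forall>s t. s *\<^sub>R (- yv, xv, zu) + t *\<^sub>R (yu, - xu, zv) = 0 \<longrightarrow> s = 0 \<and> t = 0"
  proof (intro allI impI)
    fix s t :: real
    assume "s *\<^sub>R (- yv, xv, zu) + t *\<^sub>R (yu, - xu, zv) = 0"
    then have "- s * yv + t * yu = 0" and "s * xv - t * xu = 0"
      by (simp_all add: zero_prod_def)
    then have "s * eta3 = 0" and "t * eta3 = 0"
      by algebra+
    with \<open>eta3 \<noteq> 0\<close> show "s = 0 \<and> t = 0"
      by simp
  qed
qed

text \<open>By \<open>\<eta> E = \<eta>\<^sub>3\<close> (lemma \<open>eta_Efac\<close>) this is the normal \<open>(\<eta>\<^sub>1, \<eta>\<^sub>2, E) / (\<eta> E)\<close> of the statement.\<close>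

abbreviation dual_normal :: cvec where
  "dual_normal \<equiv> (complex_of_real (eta1 / eta3), complex_of_real (eta2 / eta3), complex_of_real (E / eta3))"

lemma dual_normal_timelike:
  assumes "eta3 \<noteq> 0"
  shows "linner dual_normal dual_normal = -1"
proof -
  have "(a / d)^2 + (b / d)^2 - (c / d)^2 = -1"
    if "a^2 + b^2 + d^2 = c^2" "d \<noteq> 0" for a b c d :: real
  proof -
    have "(a / d)^2 + (b / d)^2 - (c / d)^2 = (a^2 + b^2 - c^2) / d^2"
      by (simp add: power_divide diff_divide_distrib add_divide_distrib)
    also have "\<dots> = -1"
      using that by (simp add: divide_eq_eq)
    finally show ?thesis .
  qed
  from this[OF norm_cross assms] show ?thesis
    unfolding linner_def by (simp add: complex_eq_iff power2_eq_square)
qed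

lemma graph_normal:
  assumes "zu = xu * gx + yu * gy" and "zv = xv * gx + yv * gy" and "0 < eta3"
  shows "dual_normal = (of_real (- gx), of_real (- gy), of_real (sqrt (1 + gx^2 + gy^2)))"
proof -
  have eta1: "eta1 = - gx * eta3" and eta2: "eta2 = - gy * eta3"
    unfolding assms(1,2) by algebra+
  have "E^2 = eta3^2 * (1 + gx^2 + gy^2)"
    using norm_cross unfolding eta1 eta2 by algebra
  also have "\<dots> = (eta3 * sqrt (1 + gx^2 + gy^2))^2"
    by (simp add: power_mult_distrib)
  finally have "E = eta3 * sqrt (1 + gx^2 + gy^2)"
    using nondegenerate \<open>0 < eta3\<close> by (simp add: power2_eq_iff_nonneg)
  with eta1 eta2 \<open>0 < eta3\<close> show ?thesis
    by simp
qed

end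

locale conformal_point =
  fixes x y z :: "complex \<Rightarrow> real" and p :: complex
  assumes differentiable: "x differentiable (at p)" "y differentiable (at p)" "z differentiable (at p)"
    and conformal: "(Dxi (cf x) p)^2 + (Dxi (cf y) p)^2 + (Dxi (cf z) p)^2 = 0"
    and immersion: "immersion_at x y z p"
begin

abbreviation "xu \<equiv> partial_u x p"
abbreviation "xv \<equiv> partial_v x p"
abbreviation "yu \<equiv> partial_u y p"
abbreviation "yv \<equiv> partial_v y p"
abbreviation "zu \<equiv> partial_u z p"
abbreviation "zv \<equiv> partial_v z p"

lemmas Dxi_xyz = Dxi_cf[OF differentiable(1)] Dxi_cf[OF differentiable(2)] Dxi_cf[OF differentiable(3)]

sublocale conformal_frame xu xv yu yv zu zv
proof
  have "Re ((Dxi (cf x) p)^2 + (Dxi (cf y) p)^2 + (Dxi (cf z) p)^2) = 0"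
    and "Im ((Dxi (cf x) p)^2 + (Dxi (cf y) p)^2 + (Dxi (cf z) p)^2) = 0"
    using conformal by simp_all
  then show "xv^2 + yv^2 + zv^2 = xu^2 + yu^2 + zu^2" and "xu * xv + yu * yv + zu * zv = 0"
    unfolding Dxi_xyz by (simp_all add: power2_eq_square algebra_simps)
  have "(xu, yu, zu) \<noteq> 0"
  proof
    assume "(xu, yu, zu) = 0"
    then have "1 *\<^sub>R (xu, yu, zu) + 0 *\<^sub>R (xv, yv, zv) = 0"
      by (simp add: zero_prod_def)
    then have "(1::real) = 0"
      using immersion unfolding immersion_at_iff[OF differentiable] by blast
    then show False
      by simp
  qed
  then show "0 < xu^2 + yu^2 + zu^2"
    by (simp add: zero_prod_def) (smt (verit) zero_le_power2 zero_less_power2)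
qed

lemma Efac_eq: "Efac x y z p = E"
  using equal_length by (simp add: Efac_def Dxi_xyz cmod_power2 power_divide)

lemma etavec_eq: "etavec x y z p = (of_real eta1, of_real eta2, of_real eta3)"
  unfolding etavec_def ccross_Dxi3_Dxib3[OF differentiable] cscale_def
  by (simp add: complex_eq_iff)

lemma eta_eq: "eta x y z p = eta3 / E"
proof -
  have "cnorm3 (ccross (Dxi3 x y z p) (Dxib3 x y z p)) = sqrt ((eta1^2 + eta2^2 + eta3^2) / 4)"
    unfolding ccross_Dxi3_Dxib3[OF differentiable] cnorm3_def
    by (simp add: cmod_power2 power_divide add_divide_distrib)
  also have "\<dots> = E / 2"
    using norm_cross nondegenerate by (simp add: real_sqrt_divide)
  finally show ?thesis
    unfolding eta_def Nvec_def Let_def cscale_def by (simp add: ccross_Dxi3_Dxib3[OF differentiable])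
qed

lemma eta_nonzero_iff: "eta x y z p \<noteq> 0 \<longleftrightarrow> eta3 \<noteq> 0"
  and eta_pos_iff: "0 < eta x y z p \<longleftrightarrow> 0 < eta3"
  using nondegenerate by (simp_all add: eta_eq zero_less_divide_iff)

lemma eta_Efac: "eta x y z p * Efac x y z p = eta3"
  using nondegenerate by (simp add: eta_eq Efac_eq)

lemma Estar_eq: "Estar x y z p = (eta x y z p)^2 * Efac x y z p"
proof -
  have "Estar x y z p = E - zu^2 - zv^2"
    using equal_length by (simp add: Estar_def Dxi_xyz cmod_power2 power_divide field_simps)
  also have "\<dots> = (eta3 / E)^2 * E"
    using eta3_squared nondegenerate by (simp add: power_divide power2_eq_square)
  finally show ?thesis
    by (simp only: eta_eq Efac_eq)
qed

end

locale dual_point = conformal_point +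
  fixes xs ys zs :: "complex \<Rightarrow> real" and \<rho> :: real
  assumes differentiable_dual: "xs differentiable (at p)" "ys differentiable (at p)" "zs differentiable (at p)"
    and scale_nonzero: "\<rho> \<noteq> 0"
    and Dxi_dual: "Dxi (cf xs) p = - \<i> * of_real \<rho> * Dxi (cf y) p"
      "Dxi (cf ys) p = \<i> * of_real \<rho> * Dxi (cf x) p"
      "Dxi (cf zs) p = of_real \<rho> * Dxi (cf z) p"
begin

lemma dual_partials:
  shows "partial_u xs p = - \<rho> * yv" "partial_v xs p = \<rho> * yu"
    and "partial_u ys p = \<rho> * xv" "partial_v ys p = - \<rho> * xu"
    and "partial_u zs p = \<rho> * zu" "partial_v zs p = \<rho> * zv"
  using Dxi_dual
  unfolding Dxi_cf[OF differentiable_dual(1)] Dxi_cf[OF differentiable_dual(2)]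
    Dxi_cf[OF differentiable_dual(3)] Dxi_xyz
  by (simp_all add: complex_eq_iff)

lemma Dxi_dual_null: "(Dxi (cf xs) p)^2 + (Dxi (cf ys) p)^2 - (Dxi (cf zs) p)^2 = 0"
proof -
  have "(Dxi (cf xs) p)^2 + (Dxi (cf ys) p)^2 - (Dxi (cf zs) p)^2
      = - ((of_real \<rho>)^2 * ((Dxi (cf x) p)^2 + (Dxi (cf y) p)^2 + (Dxi (cf z) p)^2))"
    unfolding Dxi_dual by (simp add: power_mult_distrib algebra_simps)
  then show ?thesis
    by (simp add: conformal)
qed

lemma Estar_dual: "Estar xs ys zs p = \<rho>^2 * (eta x y z p)^2 * Efac x y z p"
proof -
  have "Estar xs ys zs p = \<rho>^2 * Estar x y z p"
    unfolding Estar_def Dxi_dual by (simp add: norm_mult power_mult_distrib algebra_simps)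
  then show ?thesis
    by (simp add: Estar_eq)
qed

lemma immersion_dual_iff: "immersion_at xs ys zs p \<longleftrightarrow> eta3 \<noteq> 0"
proof -
  have "s *\<^sub>R (partial_u xs p, partial_u ys p, partial_u zs p)
          + t *\<^sub>R (partial_v xs p, partial_v ys p, partial_v zs p)
        = \<rho> *\<^sub>R (s *\<^sub>R (- yv, xv, zu) + t *\<^sub>R (yu, - xu, zv))" for s t
    by (simp add: dual_partials algebra_simps)
  then show ?thesis
    using scale_nonzero
    by (simp only: immersion_at_iff[OF differentiable_dual] scaleR_eq_0_iff flip: dual_frame_independent_iff) simp
qed

lemma Dxi3_dual:
  "Dxi3 xs ys zs p = (Complex (- (\<rho> * yv) / 2) (- (\<rho> * yu) / 2), Complex (\<rho> * xv / 2) (\<rho> * xu / 2),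
      Complex (\<rho> * zu / 2) (- (\<rho> * zv) / 2))"
  by (simp add: Dxi3_def Dxi_cf[OF differentiable_dual(1)] Dxi_cf[OF differentiable_dual(2)]
      Dxi_cf[OF differentiable_dual(3)] dual_partials)

lemma dual_normal_orthogonal: "linner dual_normal (Dxi3 xs ys zs p) = 0"
proof -
  have linner_eq: "linner (of_real (a1 / d), of_real (a2 / d), of_real (e / d))
      (Complex (- (r * b1) / 2) (- (r * c1) / 2), Complex (r * b2 / 2) (r * c2 / 2),
       Complex (r * b3 / 2) (- (r * c3) / 2))
    = Complex (r / (2 * d) * (- a1 * b1 + a2 * b2 - e * b3)) (- (r / (2 * d)) * (a1 * c1 - a2 * c2 - e * c3))"
    for a1 a2 e d r b1 b2 b3 c1 c2 c3 :: real
    by (simp add: linner_def complex_eq_iff algebra_simps add_divide_distrib)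
  have "linner dual_normal (Dxi3 xs ys zs p)
    = Complex (\<rho> / (2 * eta3) * (- eta1 * yv + eta2 * xv - E * zu)) (- (\<rho> / (2 * eta3)) * (eta1 * yu - eta2 * xu - E * zv))"
    unfolding Dxi3_dual by (rule linner_eq)
  also have "\<dots> = 0"
    unfolding dual_frame_orthogonal by (simp add: complex_eq_iff)
  finally show ?thesis .
qed

lemma lcross_Dxi3_dual:
  "lcross (Dxi3 xs ys zs p) (Dxib3 xs ys zs p) =
    (Complex 0 (- (\<rho>^2 * (xu * zu + xv * zv) / 2)), Complex 0 (- (\<rho>^2 * (yu * zu + yv * zv) / 2)),
     Complex 0 (\<rho>^2 * eta3 / 2))"
  unfolding lcross_def ccross_Dxi3_Dxib3[OF differentiable_dual] dual_partials
  by (simp add: complex_eq_iff power2_eq_square algebra_simps)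

lemma lnorm3_lcross_dual: "lnorm3 (lcross (Dxi3 xs ys zs p) (Dxib3 xs ys zs p)) = \<rho>^2 * (eta3^2 / E) / 2"
proof -
  have "sqrt \<bar>(r * a1 / 2)^2 + (r * a2 / 2)^2 - (r * d / 2)^2\<bar> = r * (d^2 / e) / 2"
    if "a1^2 + a2^2 - d^2 = - ((d^2 / e)^2)" "r \<ge> 0" "e > 0" for r a1 a2 d e :: real
  proof -
    have "(r * a1 / 2)^2 + (r * a2 / 2)^2 - (r * d / 2)^2 = (r / 2)^2 * (a1^2 + a2^2 - d^2)"
      by (simp add: power_mult_distrib power_divide algebra_simps)
    also have "\<dots> = - ((r * (d^2 / e) / 2)^2)"
      unfolding that(1) by (simp add: power_mult_distrib power_divide)
    finally show ?thesis
      using that(2,3) by simp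
  qed
  from this[OF dual_cross_norm _ nondegenerate] show ?thesis
    unfolding lcross_Dxi3_dual lnorm3_def by (simp add: cmod_power2)
qed

lemma Nstar_eq:
  assumes "eta3 \<noteq> 0"
  shows "Nstar xs ys zs p = cscale (-1) dual_normal"
proof -
  define L where "L = \<rho>^2 * (eta3^2 / E) / 2"
  have quotient: "(r * c / 2) / (r * (d^2 / e) / 2) = - (a / d)"
    if "c * e = - a * d" "r \<noteq> 0" "d \<noteq> 0" "e \<noteq> 0" for r a c d e :: real
  proof -
    from that have "c = - a * d / e"
      by (simp add: field_simps)
    with that show ?thesis
      by (simp add: field_simps power2_eq_square)
  qed
  have ratio: "(r * d / 2) / (r * (d^2 / e) / 2) = e / d" if "r \<noteq> 0" "d \<noteq> 0" for r d e :: real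
    using that by (simp add: field_simps power2_eq_square)
  have q1: "(\<rho>^2 * (xu * zu + xv * zv) / 2) / L = - (eta1 / eta3)"
    unfolding L_def by (rule quotient[OF dual_cross(1)]) (use assms scale_nonzero nondegenerate in simp_all)
  have q2: "(\<rho>^2 * (yu * zu + yv * zv) / 2) / L = - (eta2 / eta3)"
    unfolding L_def by (rule quotient[OF dual_cross(2)]) (use assms scale_nonzero nondegenerate in simp_all)
  have q3: "(\<rho>^2 * eta3 / 2) / L = E / eta3"
    unfolding L_def by (rule ratio) (use assms scale_nonzero in simp_all)
  have rotate: "\<i> / complex_of_real L * Complex 0 t = complex_of_real (- t / L)" for t
    by (simp add: complex_eq_iff)
  have "Nstar xs ys zs p = (of_real (- (eta1 / eta3)), of_real (- (eta2 / eta3)), of_real (- (E / eta3)))"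
    unfolding Nstar_def Let_def lnorm3_lcross_dual L_def[symmetric]
    unfolding lcross_Dxi3_dual cscale_def prod.case rotate minus_minus minus_divide_left[symmetric] q1 q2 q3 ..
  then show ?thesis
    by (simp add: cscale_def)
qed

end

lemma (in conformal_point) dual_normal_of_graph:
  fixes g :: "real \<times> real \<Rightarrow> real"
  assumes "0 < eta3" "open V" "p \<in> V" "\<forall>q\<in>V. z q = g (x q, y q)" "g differentiable (at (x p, y p))"
  defines "gx \<equiv> frechet_derivative g (at (x p, y p)) (1, 0)"
    and "gy \<equiv> frechet_derivative g (at (x p, y p)) (0, 1)"
  shows "dual_normal = (of_real (- gx), of_real (- gy), of_real (sqrt (1 + gx^2 + gy^2)))"
  unfolding gx_def gy_def
  by (rule graph_normal[OF partials_of_graph[OF assms(2-4) differentiable(1,2) assms(5)] assms(1)])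

theorem proposition2:
  fixes \<phi> :: "real \<Rightarrow> real" and I :: "real set" and U :: "complex set"
    and x y z xs ys zs :: "complex \<Rightarrow> real"
  assumes I: "is_interval I" "open I" and phi: "smooth_real_on I \<phi>"
    and U: "open U"
    and smooth: "smooth_on U x" "smooth_on U y" "smooth_on U z"
    and zI: "z ` U \<subseteq> I"
    and imm: "\<forall>p\<in>U. immersion_at x y z p"
    and conf: "\<forall>p\<in>U. (Dxi (cf x) p)^2 + (Dxi (cf y) p)^2 + (Dxi (cf z) p)^2 = 0"
    and minx: "\<forall>p\<in>U. 2 * Dxib (Dxi (cf x)) p
        + complex_of_real (deriv \<phi> (z p)) * (Dxi (cf z) p * Dxib (cf x) p + Dxib (cf z) p * Dxi (cf x) p) = 0"
    and miny: "\<forall>p\<in>U. 2 * Dxib (Dxi (cf y)) p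
        + complex_of_real (deriv \<phi> (z p)) * (Dxi (cf z) p * Dxib (cf y) p + Dxib (cf z) p * Dxi (cf y) p) = 0"
    and minz: "\<forall>p\<in>U. 2 * Dxib (Dxi (cf z)) p
        - complex_of_real (deriv \<phi> (z p) * ((cmod (Dxi (cf x) p))^2 + (cmod (Dxi (cf y) p))^2
                                              - (cmod (Dxi (cf z) p))^2)) = 0"
    and dstar: "xs differentiable_on U" "ys differentiable_on U" "zs differentiable_on U"
    and star: "\<forall>p\<in>U. Dxi (cf xs) p = - \<i> * complex_of_real (exp (\<phi> (z p))) * Dxi (cf y) p"
              "\<forall>p\<in>U. Dxi (cf ys) p = \<i> * complex_of_real (exp (\<phi> (z p))) * Dxi (cf x) p"
              "\<forall>p\<in>U. Dxi (cf zs) p = complex_of_real (exp (\<phi> (z p))) * Dxi (cf z) p"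
  shows "\<forall>p\<in>U. (Dxi (cf xs) p)^2 + (Dxi (cf ys) p)^2 - (Dxi (cf zs) p)^2 = 0
           \<and> Estar xs ys zs p = 2 * exp (\<phi> (z p))^2 * (eta x y z p)^2
                 * ((cmod (Dxi (cf x) p))^2 + (cmod (Dxi (cf y) p))^2 + (cmod (Dxi (cf z) p))^2)
           \<and> Estar xs ys zs p = exp (\<phi> (z p))^2 * (eta x y z p)^2 * Efac x y z p
           \<and> (eta x y z p \<noteq> 0 \<longleftrightarrow> immersion_at xs ys zs p)
           \<and> (eta x y z p \<noteq> 0 \<longrightarrow>
                (let d = complex_of_real (eta x y z p * Efac x y z p);
                     Nf = (fst (etavec x y z p) / d, fst (snd (etavec x y z p)) / d,
                           complex_of_real (Efac x y z p) / d)
                 in linner Nf Nf = -1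
                    \<and> linner Nf (Dxi3 xs ys zs p) = 0
                    \<and> Nstar xs ys zs p = cscale (-1) Nf
                    \<and> (eta x y z p > 0 \<longrightarrow>
                         (\<forall>V g. open V \<and> p \<in> V \<and> V \<subseteq> U
                            \<and> (g :: real \<times> real \<Rightarrow> real) differentiable (at (x p, y p))
                            \<and> (\<forall>q\<in>V. z q = g (x q, y q)) \<longrightarrow>
                            (let gx = frechet_derivative g (at (x p, y p)) (1, 0);
                                 gy = frechet_derivative g (at (x p, y p)) (0, 1)
                             in Nf = (complex_of_real (- gx), complex_of_real (- gy),
                                      complex_of_real (sqrt (1 + gx^2 + gy^2))))))))"
  apply (intro ballI)
  subgoal premises p for p
  proof -
    have differentiable_at: "f differentiable (at p)" if "f differentiable_on U" for f :: "complex \<Rightarrow> real"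
      using that U p differentiable_on_eq_differentiable_at by blast
    have smooth_differentiable: "f differentiable_on U" if "smooth_on U f" for f :: "complex \<Rightarrow> real"
      using that unfolding smooth_on_def by (metis pdiff_iter.simps(1))
    interpret dual_point x y z p xs ys zs "exp (\<phi> (z p))"
      using p imm conf star
      by unfold_locales (auto intro: differentiable_at smooth_differentiable smooth dstar)
    have normal_components: "fst (etavec x y z p) / of_real eta3 = of_real (eta1 / eta3)"
      "fst (snd (etavec x y z p)) / of_real eta3 = of_real (eta2 / eta3)"
      "complex_of_real (Efac x y z p) / of_real eta3 = of_real (E / eta3)"
      by (simp_all add: etavec_eq Efac_eq)
    have Estar_sum: "Estar xs ys zs p = 2 * exp (\<phi> (z p))^2 * (eta x y z p)^2
        * ((cmod (Dxi (cf x) p))^2 + (cmod (Dxi (cf y) p))^2 + (cmod (Dxi (cf z) p))^2)"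
      by (simp add: Estar_dual Efac_def)
    show ?thesis
      unfolding Let_def eta_Efac normal_components eta_nonzero_iff eta_pos_iff
      using Dxi_dual_null Estar_dual Estar_sum immersion_dual_iff dual_normal_timelike
        dual_normal_orthogonal Nstar_eq dual_normal_of_graph
      by blast
  qed
  done

end
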